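(* Let $\mathbf{A}\in\mathbb{C}^{M\times N_a}$ and $\mathbf{B}\in\mathbb{C}^{M\times N_b}$ have unit-$\ell_2$-norm columns, with coherence parameters $\mu_a,\mu_b,\mu_m$. Let $\mathbf{z}=\mathbf{A}\mathbf{x}+\mathbf{B}\mathbf{e}+\mathbf{n}$ with $\mathbf{x}\in\mathbb{C}^{N_a}$, $\mathbf{e}\in\mathbb{C}^{N_b}$ with support $\mathcal{E}=\mathrm{supp}(\mathbf{e})$, $|\mathcal{E}|=n_e$, known, and $\|\mathbf{n}\|_2\le\varepsilon$. Let $n_x\ge1$ and $\mathcal{X}=\mathrm{supp}_{n_x}(\mathbf{x})$. If $$2n_xn_e\mu_m^2< f(2n_x,n_e)=[1-\mu_a(2n_x-1)]^+\,[1-\mu_b(n_e-1)]^+,$$ then, with $\mathbf{R}_{\mathcal{E}}=\mathbf{I}_M-\mathbf{B}_{\mathcal{E}}\mathbf{B}_{\mathcal{E}}^\dagger$ and any $\eta\ge\varepsilon$, every solution $\hat{\mathbf{x}}$ of $$\text{minimize }\|\tilde{\mathbf{x}}\|_1\ \text{ subject to }\ \|\mathbf{R}_{\mathcal{E}}(\mathbf{z}-\mathbf{A}\tilde{\mathbf{x}})\|_2\le\eta$$ satisfies $$\|\mathbf{x}-\hat{\mathbf{x}}\|_2\le C_5(\varepsilon+\eta)+C_6\|\mathbf{x}-\mathbf{x}_{\mathcal{X}}\|_1,$$ where $C_5,C_6\ge0$ depend only on $\mu_a,\mu_b,\mu_m,n_x,n_e$.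
   Context: Coherence parameters: $\mu_a=\max_{k\ne\ell}|\mathbf{a}_k^H\mathbf{a}_\ell|$, $\mu_b=\max_{k\ne\ell}|\mathbf{b}_k^H\mathbf{b}_\ell|$, $\mu_m=\max_{k,\ell}|\mathbf{a}_k^H\mathbf{b}_\ell|$, where $\mathbf{a}_k,\mathbf{b}_\ell$ are the columns of $\mathbf{A},\mathbf{B}$. $[x]^+=\max\{x,0\}$. $\mathbf{B}_{\mathcal{E}}$ is the submatrix of columns of $\mathbf{B}$ indexed by $\mathcal{E}$, $\mathbf{M}^\dagger=(\mathbf{M}^H\mathbf{M})^{-1}\mathbf{M}^H$. $\mathbf{x}_{\mathcal{S}}$ is $\mathbf{x}$ with entries outside $\mathcal{S}$ set to zero. $\mathrm{supp}_n(\mathbf{x})$ denotes an index set of size $n$ minimizing $\|\mathbf{x}-\mathbf{x}_{\tilde{\mathcal{X}}}\|_1$ over all index sets $\tilde{\mathcal X}$ of size $n$. *)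

theory Defs
  imports "Jordan_Normal_Form.Gauss_Jordan_Elimination" "Jordan_Normal_Form.DL_Submatrix"
begin

definition l2norm :: "complex vec \<Rightarrow> real" where
  "l2norm v = sqrt (\<Sum>i<dim_vec v. (cmod (v $ i))^2)"

definition l1norm :: "complex vec \<Rightarrow> real" where
  "l1norm v = (\<Sum>i<dim_vec v. cmod (v $ i))"

definition herm_inner :: "complex vec \<Rightarrow> complex vec \<Rightarrow> complex" where
  "herm_inner a b = (\<Sum>i<dim_vec a. cnj (a $ i) * b $ i)"

definition ctrans :: "complex mat \<Rightarrow> complex mat" where
  "ctrans A = mat (dim_col A) (dim_row A) (\<lambda>(i,j). cnj (A $$ (j,i)))"

text \<open>Moore-Penrose pseudo-inverse of a full-column-rank matrix: (M^H M)^{-1} M^H.\<close>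
definition pinv :: "complex mat \<Rightarrow> complex mat" where
  "pinv M = the (mat_inverse (ctrans M * M)) * ctrans M"

text \<open>Submatrix of the columns indexed by S (in increasing order).\<close>
definition col_submat :: "complex mat \<Rightarrow> nat set \<Rightarrow> complex mat" where
  "col_submat M S = submatrix M UNIV S"

text \<open>Coherence parameters (maximum over an empty index set is taken to be 0).\<close>
definition mutual_coh :: "complex mat \<Rightarrow> real" where
  "mutual_coh A = Max (insert 0 {cmod (herm_inner (col A k) (col A l)) | k l.
      k < dim_col A \<and> l < dim_col A \<and> k \<noteq> l})"

definition cross_coh :: "complex mat \<Rightarrow> complex mat \<Rightarrow> real" where
  "cross_coh A B = Max (insert 0 {cmod (herm_inner (col A k) (col B l)) | k l.
      k < dim_col A \<and> l < dim_col B})"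

definition vsupp :: "complex vec \<Rightarrow> nat set" where
  "vsupp v = {i. i < dim_vec v \<and> v $ i \<noteq> 0}"

definition restrict_vec :: "complex vec \<Rightarrow> nat set \<Rightarrow> complex vec" where
  "restrict_vec v S = vec (dim_vec v) (\<lambda>i. if i \<in> S then v $ i else 0)"

text \<open>S is a valid choice of supp_n(x): an index set of size n minimizing the l1 tail.\<close>
definition is_supp_n :: "nat \<Rightarrow> complex vec \<Rightarrow> nat set \<Rightarrow> bool" where
  "is_supp_n n v S \<longleftrightarrow> S \<subseteq> {..<dim_vec v} \<and> card S = n \<and>
     (\<forall>T. T \<subseteq> {..<dim_vec v} \<and> card T = n \<longrightarrow>
        l1norm (v - restrict_vec v S) \<le> l1norm (v - restrict_vec v T))"

definition pos_part :: "real \<Rightarrow> real" where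
  "pos_part t = max t 0"

definition fcoh :: "real \<Rightarrow> real \<Rightarrow> nat \<Rightarrow> nat \<Rightarrow> real" where
  "fcoh mua mub na nb = pos_part (1 - mua * (real na - 1)) * pos_part (1 - mub * (real nb - 1))"

end

theory Submission imports Defs "Jordan_Normal_Form.Determinant" begin

(* The projector R = I - B_E B_E^dagger annihilates B e, so R z = R A x + R n, and the
   recovery problem becomes an l1-minimisation for the "effective dictionary" R A.  Writing
   h = x - xhat, the Gram entries a_i^H R a_j differ from a_i^H a_j by at most
   delta = n_e mu_m^2 / (1 - mu_b (n_e - 1)), since the projection onto range B_E is controlled
   by a Gershgorin bound on the Gram matrix B_E^H B_E.  This gives, for every row i,
       (1 + mu_a) |h_i| <= ||R A h|| + (mu_a + delta) ||h||_1 .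
   Combined with the usual l1 cone inequality on the best n_x-term support, the coherence
   condition 2 n_x n_e mu_m^2 < f(2 n_x, n_e) makes the resulting linear system solvable. *)

section \<open>Norms and the Hermitian inner product\<close>

lemma cauchy_schwarz_sum:
  fixes a b :: "'a \<Rightarrow> real"
  shows "(\<Sum>i\<in>I. a i * b i)\<^sup>2 \<le> (\<Sum>i\<in>I. (a i)\<^sup>2) * (\<Sum>i\<in>I. (b i)\<^sup>2)"
proof (cases "(\<Sum>i\<in>I. (b i)\<^sup>2) > 0")
  case False
  then consider "\<And>i. i\<in>I \<Longrightarrow> b i = 0" | "infinite I"
    by (metis (mono_tags, lifting) sum_pos2 zero_le_power2 zero_less_power2)
  thus ?thesis
    by fastforce
next
  case True
  define r where "r \<equiv> (\<Sum>i\<in>I. a i * b i) / (\<Sum>i\<in>I. (b i)\<^sup>2)"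
  have "0 \<le> (\<Sum>i\<in>I. (a i - r * b i)\<^sup>2)"
    by (simp add: sum_nonneg)
  also have "\<dots> = (\<Sum>i\<in>I. (a i)\<^sup>2) - 2 * r * (\<Sum>i\<in>I. a i * b i) + r\<^sup>2 * (\<Sum>i\<in>I. (b i)\<^sup>2)"
    by (simp add: algebra_simps power2_eq_square sum_distrib_left flip: sum.distrib)
  also have "\<dots> = (\<Sum>i\<in>I. (a i)\<^sup>2) - (\<Sum>i\<in>I. a i * b i)\<^sup>2 / (\<Sum>i\<in>I. (b i)\<^sup>2)"
    by (simp add: r_def power2_eq_square)
  finally have "(\<Sum>i\<in>I. a i * b i)\<^sup>2 / (\<Sum>i\<in>I. (b i)\<^sup>2) \<le> (\<Sum>i\<in>I. (a i)\<^sup>2)"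
    by (simp add: le_diff_eq)
  thus ?thesis
    by (simp add: pos_divide_le_eq True)
qed

lemma l2norm_nonneg: "l2norm v \<ge> 0"
  unfolding l2norm_def by (simp add: sum_nonneg)

lemma l2norm_sq: "(l2norm v)^2 = (\<Sum>i<dim_vec v. (cmod (v $ i))^2)"
  unfolding l2norm_def by (simp add: sum_nonneg)

lemma l1norm_nonneg: "l1norm v \<ge> 0"
  unfolding l1norm_def by (simp add: sum_nonneg)

lemma l2norm_uminus: "l2norm (- v) = l2norm v"
  unfolding l2norm_def by simp

lemma l2_le_l1: "l2norm v \<le> l1norm v"
proof -
  have "(\<Sum>i<dim_vec v. (cmod (v $ i))^2) \<le> (\<Sum>i<dim_vec v. cmod (v $ i) * l1norm v)"
  proof (rule sum_mono)
    fix i assume "i \<in> {..<dim_vec v}"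
    hence "cmod (v $ i) \<le> l1norm v" unfolding l1norm_def
      by (intro member_le_sum) auto
    thus "(cmod (v $ i))^2 \<le> cmod (v $ i) * l1norm v"
      by (simp add: power2_eq_square mult_left_mono)
  qed
  also have "\<dots> = (l1norm v)^2" unfolding l1norm_def
    by (simp add: power2_eq_square sum_distrib_right)
  finally show ?thesis
    using l1norm_nonneg[of v] by (simp add: l2norm_def real_sqrt_le_iff real_le_lsqrt sum_nonneg)
qed

lemma herm_CS: assumes "dim_vec a = dim_vec b"
  shows "cmod (herm_inner a b) \<le> l2norm a * l2norm b"
proof -
  let ?S = "\<Sum>i<dim_vec a. cmod (a $ i) * cmod (b $ i)"
  have "cmod (herm_inner a b) \<le> (\<Sum>i<dim_vec a. cmod (cnj (a $ i) * b $ i))"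
    unfolding herm_inner_def by (rule norm_sum)
  also have "\<dots> = ?S" by (simp add: norm_mult)
  finally have bound: "cmod (herm_inner a b) \<le> ?S" .
  have "?S\<^sup>2 \<le> (\<Sum>i<dim_vec a. (cmod (a $ i))\<^sup>2) * (\<Sum>i<dim_vec a. (cmod (b $ i))\<^sup>2)"
    by (rule cauchy_schwarz_sum)
  also have "\<dots> = (l2norm a * l2norm b)^2" using assms
    by (simp add: l2norm_sq power_mult_distrib)
  finally have "?S \<le> l2norm a * l2norm b"
    using l2norm_nonneg by (meson mult_nonneg_nonneg power2_le_imp_le)
  with bound show ?thesis by linarith
qed

lemma herm_l1_bound: assumes "dim_vec u = dim_vec w" "\<forall>k<dim_vec w. cmod (w $ k) \<le> m"
  shows "cmod (herm_inner u w) \<le> m * l1norm u"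
proof -
  have "cmod (herm_inner u w) \<le> (\<Sum>i<dim_vec u. cmod (cnj (u $ i) * w $ i))"
    unfolding herm_inner_def by (rule norm_sum)
  also have "\<dots> \<le> (\<Sum>i<dim_vec u. m * cmod (u $ i))"
  proof (rule sum_mono)
    fix i assume "i \<in> {..<dim_vec u}"
    hence "cmod (w $ i) \<le> m" using assms by auto
    hence "cmod (u $ i) * cmod (w $ i) \<le> cmod (u $ i) * m" by (simp add: mult_left_mono)
    thus "cmod (cnj (u $ i) * w $ i) \<le> m * cmod (u $ i)" by (simp add: norm_mult mult.commute)
  qed
  finally show ?thesis unfolding l1norm_def by (simp add: sum_distrib_left)
qed

lemma herm_sym: "dim_vec a = dim_vec b \<Longrightarrow> herm_inner a b = cnj (herm_inner b a)"
  unfolding herm_inner_def by (simp add: mult.commute)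

lemma herm_self: "herm_inner a a = complex_of_real ((l2norm a)^2)"
  unfolding herm_inner_def l2norm_sq of_real_sum
  by (intro sum.cong refl) (metis complex_norm_square of_real_power mult.commute)

lemma herm_add1: "dim_vec u = dim_vec v \<Longrightarrow> herm_inner (u + v) w = herm_inner u w + herm_inner v w"
  unfolding herm_inner_def by (simp add: algebra_simps sum.distrib)

lemma herm_minus2: "dim_vec u = dim_vec v \<Longrightarrow> dim_vec w = dim_vec u \<Longrightarrow>
   herm_inner w (u - v) = herm_inner w u - herm_inner w v"
  unfolding herm_inner_def by (simp add: algebra_simps sum_subtractf)

lemma cmod_add_sq: "(cmod (x + y))^2 = (cmod x)^2 + (cmod y)^2 + 2 * Re (cnj x * y)"
  unfolding cmod_power2 by (simp add: power2_eq_square algebra_simps)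

lemma l2norm_add_sq: assumes "dim_vec a = dim_vec b"
  shows "(l2norm (a + b))^2 = (l2norm a)^2 + (l2norm b)^2 + 2 * Re (herm_inner a b)"
  using assms by (simp add: l2norm_sq herm_inner_def cmod_add_sq sum.distrib sum_distrib_left)

lemma l2norm_triangle: assumes "dim_vec a = dim_vec b"
  shows "l2norm (a + b) \<le> l2norm a + l2norm b"
proof -
  have "Re (herm_inner a b) \<le> l2norm a * l2norm b"
    using herm_CS[OF assms] complex_Re_le_cmod order_trans by blast
  hence "(l2norm (a + b))^2 \<le> (l2norm a + l2norm b)^2"
    using l2norm_add_sq[OF assms] by (simp add: power2_eq_square algebra_simps)
  thus ?thesis using l2norm_nonneg
    by (meson add_nonneg_nonneg power2_le_imp_le)
qed

lemma l2norm_diff: assumes "dim_vec a = dim_vec b" shows "l2norm (a - b) \<le> l2norm a + l2norm b"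
proof -
  have "a - b = a + (- b)" using assms by (intro eq_vecI) auto
  thus ?thesis using l2norm_triangle[of a "- b"] assms l2norm_uminus[of b] by simp
qed

lemma mult_mat_vec_zero_right: "A \<in> carrier_mat m k \<Longrightarrow> A *\<^sub>v 0\<^sub>v k = 0\<^sub>v m"
  by (intro eq_vecI) (auto simp: scalar_prod_def)

lemma herm_inner_mult: assumes "A \<in> carrier_mat m n" "h \<in> carrier_vec n" "a \<in> carrier_vec m"
  shows "herm_inner a (A *\<^sub>v h) = (\<Sum>j<n. h $ j * herm_inner a (col A j))"
proof -
  have "herm_inner a (A *\<^sub>v h) = (\<Sum>i<m. cnj (a $ i) * (\<Sum>j<n. A $$ (i,j) * h $ j))"
    using assms unfolding herm_inner_def
    by (intro sum.cong refl) (auto simp: scalar_prod_def atLeast0LessThan)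
  also have "\<dots> = (\<Sum>i<m. \<Sum>j<n. h $ j * (cnj (a $ i) * A $$ (i,j)))"
    by (simp add: sum_distrib_left algebra_simps)
  also have "\<dots> = (\<Sum>j<n. \<Sum>i<m. h $ j * (cnj (a $ i) * A $$ (i,j)))"
    by (rule sum.swap)
  also have "\<dots> = (\<Sum>j<n. h $ j * herm_inner a (col A j))"
    using assms unfolding herm_inner_def
    by (intro sum.cong refl) (auto simp: sum_distrib_left)
  finally show ?thesis .
qed

lemma ctrans_carrier: "A \<in> carrier_mat m n \<Longrightarrow> ctrans A \<in> carrier_mat n m"
  unfolding ctrans_def by auto

lemma ctrans_index: "A \<in> carrier_mat m n \<Longrightarrow> i < n \<Longrightarrow> j < m \<Longrightarrow> ctrans A $$ (i,j) = cnj (A $$ (j,i))"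
  unfolding ctrans_def by auto

lemma herm_adj: assumes "A \<in> carrier_mat m n" "c \<in> carrier_vec n" "w \<in> carrier_vec m"
  shows "herm_inner (A *\<^sub>v c) w = herm_inner c (ctrans A *\<^sub>v w)"
proof -
  have "herm_inner (A *\<^sub>v c) w = (\<Sum>i<m. (\<Sum>j<n. cnj (A $$ (i,j)) * cnj (c $ j)) * w $ i)"
    using assms unfolding herm_inner_def
    by (intro sum.cong refl) (auto simp: scalar_prod_def atLeast0LessThan)
  also have "\<dots> = (\<Sum>i<m. \<Sum>j<n. cnj (c $ j) * (cnj (A $$ (i,j)) * w $ i))"
    by (simp add: sum_distrib_left sum_distrib_right mult_ac)
  also have "\<dots> = (\<Sum>j<n. \<Sum>i<m. cnj (c $ j) * (cnj (A $$ (i,j)) * w $ i))"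
    by (rule sum.swap)
  also have "\<dots> = herm_inner c (ctrans A *\<^sub>v w)"
    using assms ctrans_carrier[OF assms(1)] unfolding herm_inner_def
    by (intro sum.cong refl) (auto simp: scalar_prod_def atLeast0LessThan sum_distrib_left ctrans_index)
  finally show ?thesis .
qed

lemma mutual_coh_fin: "finite {cmod (herm_inner (col A k) (col A l)) | k l.
      k < dim_col A \<and> l < dim_col A \<and> k \<noteq> l}"
  by (rule finite_subset[where B = "(\<lambda>(k,l). cmod (herm_inner (col A k) (col A l))) `
        ({..<dim_col A} \<times> {..<dim_col A})"]) auto

lemma mutual_coh_bound: "k < dim_col A \<Longrightarrow> l < dim_col A \<Longrightarrow> k \<noteq> l \<Longrightarrow>
    cmod (herm_inner (col A k) (col A l)) \<le> mutual_coh A"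
  unfolding mutual_coh_def using mutual_coh_fin[of A] by (intro Max_ge) auto

lemma mutual_coh_nonneg: "mutual_coh A \<ge> 0"
  unfolding mutual_coh_def using mutual_coh_fin[of A] by (intro Max_ge) auto

lemma cross_coh_fin: "finite {cmod (herm_inner (col A k) (col B l)) | k l.
      k < dim_col A \<and> l < dim_col B}"
  by (rule finite_subset[where B = "(\<lambda>(k,l). cmod (herm_inner (col A k) (col B l))) `
        ({..<dim_col A} \<times> {..<dim_col B})"]) auto

lemma cross_coh_bound: "k < dim_col A \<Longrightarrow> l < dim_col B \<Longrightarrow>
    cmod (herm_inner (col A k) (col B l)) \<le> cross_coh A B"
  unfolding cross_coh_def using cross_coh_fin[of A B] by (intro Max_ge) auto

lemma cross_coh_nonneg: "cross_coh A B \<ge> 0"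
  unfolding cross_coh_def using cross_coh_fin[of A B] by (intro Max_ge) auto

lemma cross_coh_bound_sym: "k < dim_col A \<Longrightarrow> l < dim_col B \<Longrightarrow> dim_row A = dim_row B \<Longrightarrow>
    cmod (herm_inner (col B l) (col A k)) \<le> cross_coh A B"
  using herm_sym[of "col B l" "col A k"] cross_coh_bound[of k A l B] by simp

text \<open>This is the Gershgorin
  argument used both for the Gram matrix of B_E and for the projected dictionary R A.\<close>
lemma row_bound:
  fixes g h :: "nat \<Rightarrow> complex"
  assumes i: "i < N" and gi: "cmod (g i) \<ge> 1 - d"
    and gj: "\<forall>j<N. j \<noteq> i \<longrightarrow> cmod (g j) \<le> k"
    and t: "cmod (\<Sum>j<N. g j * h j) \<le> t"
  shows "(1 - d + k) * cmod (h i) \<le> t + k * (\<Sum>j<N. cmod (h j))"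
proof -
  let ?R = "{..<N} - {i}"
  have split: "(\<Sum>j<N. g j * h j) = g i * h i + (\<Sum>j\<in>?R. g j * h j)"
    using i by (simp add: sum.remove)
  have splith: "(\<Sum>j<N. cmod (h j)) = cmod (h i) + (\<Sum>j\<in>?R. cmod (h j))"
    using i by (simp add: sum.remove)
  have rest: "cmod (\<Sum>j\<in>?R. g j * h j) \<le> k * (\<Sum>j\<in>?R. cmod (h j))"
  proof -
    have "cmod (\<Sum>j\<in>?R. g j * h j) \<le> (\<Sum>j\<in>?R. cmod (g j * h j))" by (rule norm_sum)
    also have "\<dots> \<le> (\<Sum>j\<in>?R. k * cmod (h j))"
      using gj by (intro sum_mono) (auto simp: norm_mult intro: mult_right_mono)
    finally show ?thesis by (simp add: sum_distrib_left)
  qed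
  have "(1 - d) * cmod (h i) \<le> cmod (g i * h i)"
    using gi by (simp add: norm_mult mult_right_mono)
  also have "\<dots> \<le> cmod (\<Sum>j<N. g j * h j) + cmod (\<Sum>j\<in>?R. g j * h j)"
    unfolding split by (metis add_diff_cancel_right' norm_triangle_ineq4)
  finally have "(1 - d) * cmod (h i) \<le> t + k * (\<Sum>j\<in>?R. cmod (h j))"
    using t rest by linarith
  thus ?thesis unfolding splith by (simp add: algebra_simps)
qed

section \<open>The projector onto the orthogonal complement of range B_E\<close>

locale known_support =
  fixes M Nb :: nat and B :: "complex mat" and E :: "nat set"
  assumes B: "B \<in> carrier_mat M Nb" and unitB: "\<forall>k<Nb. l2norm (col B k) = 1"
    and E: "E \<subseteq> {..<Nb}" and dominant: "1 - mutual_coh B * (real (card E) - 1) > 0"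
begin

abbreviation "ne \<equiv> card E"
abbreviation "BE \<equiv> col_submat B E"
abbreviation "pE \<equiv> pick E"
abbreviation "G \<equiv> ctrans BE * BE"
abbreviation "mub \<equiv> mutual_coh B"
abbreviation "R \<equiv> 1\<^sub>m M - BE * pinv BE"

lemma finE: "finite E" using E finite_subset by blast

lemma pE_in: "k < ne \<Longrightarrow> pE k \<in> E" by (rule pick_in_set) auto

lemma pE_lt: "k < ne \<Longrightarrow> pE k < Nb" using pE_in E by auto

lemma pE_inj: "inj_on pE {..<ne}"
proof (rule inj_onI)
  fix x y assume "x \<in> {..<ne}" "y \<in> {..<ne}" "pE x = pE y"
  thus "x = y" using pick_mono[of x E] pick_mono[of y E] by (metis lessThan_iff nat_neq_iff)
qed

lemma pE_image: "pE ` {..<ne} = E"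
proof -
  have "pE ` {..<ne} \<subseteq> E" using pE_in by auto
  moreover have "card (pE ` {..<ne}) = ne" using pE_inj card_image by fastforce
  ultimately show ?thesis using finE by (metis card_subset_eq)
qed

lemma setE: "{j. j < Nb \<and> j \<in> E} = E" using E by auto

lemma BE_carrier: "BE \<in> carrier_mat M ne"
  using B unfolding col_submat_def carrier_mat_def by (auto simp: dim_submatrix setE)

lemma BE_index: "i < M \<Longrightarrow> k < ne \<Longrightarrow> BE $$ (i,k) = B $$ (i, pE k)"
  unfolding col_submat_def using B by (subst submatrix_index) (auto simp: setE pick_UNIV)

lemma ctrans_BE: "ctrans BE \<in> carrier_mat ne M" using ctrans_carrier[OF BE_carrier] .

lemma G_carrier: "G \<in> carrier_mat ne ne" using ctrans_BE BE_carrier by auto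

lemma ctrans_BE_index: "a \<in> carrier_vec M \<Longrightarrow> k < ne \<Longrightarrow>
   (ctrans BE *\<^sub>v a) $ k = herm_inner (col B (pE k)) a"
  using ctrans_BE BE_carrier B pE_lt unfolding herm_inner_def
  by (auto simp: scalar_prod_def atLeast0LessThan ctrans_index BE_index intro!: sum.cong)

lemma G_index: assumes k: "k < ne" and l: "l < ne"
  shows "G $$ (k,l) = herm_inner (col B (pE k)) (col B (pE l))"
proof -
  have col: "col BE l = col B (pE l)"
    using l BE_carrier B pE_lt by (intro eq_vecI) (auto simp: BE_index)
  have "G $$ (k,l) = (ctrans BE *\<^sub>v col BE l) $ k"
    using k l ctrans_BE BE_carrier by auto
  also have "\<dots> = herm_inner (col B (pE k)) (col B (pE l))"
    using k l B pE_lt by (subst ctrans_BE_index) (auto simp: col)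
  finally show ?thesis .
qed

lemma gram_l1_lower_bound: assumes c: "c \<in> carrier_vec ne"
  shows "(1 - mub * (real ne - 1)) * l1norm c \<le> l1norm (G *\<^sub>v c)"
proof -
  have row: "(1 + mub) * cmod (c $ k) \<le> cmod ((G *\<^sub>v c) $ k) + mub * l1norm c"
    if k: "k < ne" for k
  proof -
    have "(1 - 0 + mub) * cmod (c $ k) \<le> cmod ((G *\<^sub>v c) $ k) + mub * (\<Sum>j<ne. cmod (c $ j))"
    proof (rule row_bound[where g="\<lambda>j. G $$ (k,j)"])
      show "cmod (\<Sum>j<ne. G $$ (k, j) * c $ j) \<le> cmod ((G *\<^sub>v c) $ k)"
        using k c G_carrier by (auto simp: scalar_prod_def atLeast0LessThan simp del: index_mult_mat)
      show "1 - 0 \<le> cmod (G $$ (k, k))"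
        using k G_index herm_self unitB pE_lt by simp
      show "\<forall>j<ne. j \<noteq> k \<longrightarrow> cmod (G $$ (k, j)) \<le> mub"
        using k G_index pE_lt pE_inj B
        by (metis inj_on_eq_iff lessThan_iff mutual_coh_bound carrier_matD(2))
    qed (rule k)
    thus ?thesis using c unfolding l1norm_def by simp
  qed
  have "(\<Sum>k<ne. (1 + mub) * cmod (c $ k)) \<le> (\<Sum>k<ne. cmod ((G *\<^sub>v c) $ k) + mub * l1norm c)"
    using row by (intro sum_mono) auto
  moreover have "dim_vec (G *\<^sub>v c) = ne" "dim_vec c = ne" using G_carrier c by auto
  ultimately have "(1 + mub) * l1norm c \<le> l1norm (G *\<^sub>v c) + real ne * mub * l1norm c"
    unfolding l1norm_def by (simp add: sum_distrib_left sum.distrib mult.assoc)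
  thus ?thesis by (simp add: algebra_simps)
qed

lemma G_inj: assumes c: "c \<in> carrier_vec ne" and z: "G *\<^sub>v c = 0\<^sub>v ne"
  shows "c = 0\<^sub>v ne"
proof -
  have "(1 - mub * (real ne - 1)) * l1norm c \<le> 0"
    using gram_l1_lower_bound[OF c] z by (simp add: l1norm_def)
  hence "l1norm c = 0" using dominant l1norm_nonneg[of c] by (simp add: mult_le_0_iff)
  hence "\<forall>i\<in>{..<dim_vec c}. cmod (c $ i) = 0" unfolding l1norm_def
    by (subst sum_nonneg_eq_0_iff[symmetric]) auto
  thus ?thesis using c by (intro eq_vecI) auto
qed

definition "Gi = the (mat_inverse G)"

text \<open>Diagonal dominance makes the Gram matrix invertible, so pinv B_E is well defined.\<close>
lemma Gi_props: "G * Gi = 1\<^sub>m ne \<and> Gi * G = 1\<^sub>m ne \<and> Gi \<in> carrier_mat ne ne"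
proof -
  have "det G \<noteq> 0"
    using det_0_iff_vec_prod_zero[OF G_carrier] G_inj by blast
  hence "mat_inverse G \<noteq> None"
    using mat_inverse(1)[where b="()", OF G_carrier] det_non_zero_imp_unit[where b="()", OF G_carrier]
    by blast
  then obtain X where X: "mat_inverse G = Some X" by auto
  hence "Gi = X" unfolding Gi_def by simp
  thus ?thesis using mat_inverse(2)[OF G_carrier X] by simp
qed

lemma Gi_carrier: "Gi \<in> carrier_mat ne ne" using Gi_props by simp

definition "coef v = Gi *\<^sub>v (ctrans BE *\<^sub>v v)"

lemma coef_carrier: "v \<in> carrier_vec M \<Longrightarrow> coef v \<in> carrier_vec ne"
  unfolding coef_def using Gi_carrier ctrans_BE by auto

lemma R_apply: assumes v: "v \<in> carrier_vec M" shows "R *\<^sub>v v = v - BE *\<^sub>v coef v"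
proof -
  have pinv: "pinv BE = Gi * ctrans BE" unfolding pinv_def Gi_def ..
  have "R *\<^sub>v v = 1\<^sub>m M *\<^sub>v v - (BE * (Gi * ctrans BE)) *\<^sub>v v"
    unfolding pinv using BE_carrier Gi_carrier ctrans_BE v
    by (intro minus_mult_distrib_mat_vec) auto
  also have "(BE * (Gi * ctrans BE)) *\<^sub>v v = BE *\<^sub>v coef v"
    unfolding coef_def using Gi_carrier ctrans_BE v
    by (simp add: assoc_mult_mat_vec[OF BE_carrier, of _ M] assoc_mult_mat_vec[OF Gi_carrier ctrans_BE])
  finally show ?thesis using v by simp
qed

lemma R_carrier_mat: "R \<in> carrier_mat M M"
  unfolding pinv_def using BE_carrier ctrans_BE Gi_carrier Gi_def by auto

lemma R_carrier: "v \<in> carrier_vec M \<Longrightarrow> R *\<^sub>v v \<in> carrier_vec M"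
  using BE_carrier coef_carrier by (simp add: R_apply)

lemma gram_coef: assumes a: "a \<in> carrier_vec M" shows "G *\<^sub>v coef a = ctrans BE *\<^sub>v a"
proof -
  have w: "ctrans BE *\<^sub>v a \<in> carrier_vec ne" using ctrans_BE a by simp
  have "G *\<^sub>v coef a = (G * Gi) *\<^sub>v (ctrans BE *\<^sub>v a)"
    unfolding coef_def using assoc_mult_mat_vec[OF G_carrier Gi_carrier w] by simp
  thus ?thesis using Gi_props w by simp
qed

lemma R_orthogonal: assumes v: "v \<in> carrier_vec M" and c: "c \<in> carrier_vec ne"
  shows "herm_inner (BE *\<^sub>v c) (R *\<^sub>v v) = 0"
proof -
  have "ctrans BE *\<^sub>v (BE *\<^sub>v coef v) = G *\<^sub>v coef v"
    using assoc_mult_mat_vec[OF ctrans_BE BE_carrier coef_carrier[OF v]] by simp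
  hence "ctrans BE *\<^sub>v (R *\<^sub>v v) = ctrans BE *\<^sub>v v - ctrans BE *\<^sub>v v"
    unfolding R_apply[OF v] gram_coef[OF v]
    using v BE_carrier ctrans_BE coef_carrier[OF v] by (subst mult_minus_distrib_mat_vec) auto
  hence "ctrans BE *\<^sub>v (R *\<^sub>v v) = 0\<^sub>v ne" using ctrans_BE v by auto
  moreover have "herm_inner (BE *\<^sub>v c) (R *\<^sub>v v) = herm_inner c (ctrans BE *\<^sub>v (R *\<^sub>v v))"
    using BE_carrier c R_carrier[OF v] by (rule herm_adj)
  ultimately show ?thesis unfolding herm_inner_def using c by simp
qed

lemma R_decomp: assumes v: "v \<in> carrier_vec M" shows "v = R *\<^sub>v v + BE *\<^sub>v coef v"
  unfolding R_apply[OF v] using v BE_carrier coef_carrier[OF v] by (intro eq_vecI) auto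

text \<open>R is an orthogonal projector, hence a contraction (Pythagoras).\<close>
lemma R_contract: assumes v: "v \<in> carrier_vec M" shows "l2norm (R *\<^sub>v v) \<le> l2norm v"
proof -
  have d: "dim_vec (R *\<^sub>v v) = dim_vec (BE *\<^sub>v coef v)"
    using R_carrier[OF v] BE_carrier coef_carrier[OF v] by auto
  have "herm_inner (R *\<^sub>v v) (BE *\<^sub>v coef v) = 0"
    using herm_sym[OF d] R_orthogonal[OF v coef_carrier[OF v]] by simp
  hence "(l2norm v)^2 = (l2norm (R *\<^sub>v v))^2 + (l2norm (BE *\<^sub>v coef v))^2"
    using l2norm_add_sq[OF d] R_decomp[OF v] by simp
  hence "(l2norm (R *\<^sub>v v))^2 \<le> (l2norm v)^2" by simp
  thus ?thesis using l2norm_nonneg power2_le_imp_le by blast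
qed

text \<open>Inner products against R v only see the projected component: |a^H R v| <= ||a|| ||R v||.\<close>
lemma herm_R_bound: assumes a: "a \<in> carrier_vec M" and v: "v \<in> carrier_vec M"
  shows "cmod (herm_inner a (R *\<^sub>v v)) \<le> l2norm a * l2norm (R *\<^sub>v v)"
proof -
  have d: "dim_vec (R *\<^sub>v a) = dim_vec (BE *\<^sub>v coef a)"
    using R_carrier[OF a] BE_carrier coef_carrier[OF a] by auto
  have "herm_inner a (R *\<^sub>v v) = herm_inner (R *\<^sub>v a) (R *\<^sub>v v) + herm_inner (BE *\<^sub>v coef a) (R *\<^sub>v v)"
    using herm_add1[OF d] R_decomp[OF a] by metis
  hence e: "herm_inner a (R *\<^sub>v v) = herm_inner (R *\<^sub>v a) (R *\<^sub>v v)"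
    using R_orthogonal[OF v coef_carrier[OF a]] by simp
  have "cmod (herm_inner (R *\<^sub>v a) (R *\<^sub>v v)) \<le> l2norm (R *\<^sub>v a) * l2norm (R *\<^sub>v v)"
    using R_carrier[OF a] R_carrier[OF v] by (intro herm_CS) auto
  also have "\<dots> \<le> l2norm a * l2norm (R *\<^sub>v v)"
    using R_contract[OF a] l2norm_nonneg by (intro mult_right_mono) auto
  finally show ?thesis using e by simp
qed

lemma R_kills_supported: assumes e: "e \<in> carrier_vec Nb" and supp: "\<forall>j<Nb. j \<notin> E \<longrightarrow> e $ j = 0"
  shows "R *\<^sub>v (B *\<^sub>v e) = 0\<^sub>v M"
proof -
  define c where "c = vec ne (\<lambda>k. e $ pE k)"
  have c: "c \<in> carrier_vec ne" unfolding c_def by simp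
  have Be: "B *\<^sub>v e = BE *\<^sub>v c"
  proof (rule eq_vecI)
    fix i assume "i < dim_vec (BE *\<^sub>v c)"
    hence i: "i < M" using BE_carrier by simp
    have "(B *\<^sub>v e) $ i = (\<Sum>j<Nb. B $$ (i,j) * e $ j)"
      using i B e by (auto simp: scalar_prod_def atLeast0LessThan)
    also have "\<dots> = (\<Sum>j\<in>E. B $$ (i,j) * e $ j)"
      using supp E by (intro sum.mono_neutral_right) auto
    also have "\<dots> = (\<Sum>k<ne. B $$ (i,pE k) * e $ pE k)"
      by (subst pE_image[symmetric], subst sum.reindex[OF pE_inj]) simp
    also have "\<dots> = (BE *\<^sub>v c) $ i"
      using i BE_carrier by (auto simp: c_def scalar_prod_def atLeast0LessThan BE_index)
    finally show "(B *\<^sub>v e) $ i = (BE *\<^sub>v c) $ i" .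
  qed (use B BE_carrier in simp)
  have "coef (BE *\<^sub>v c) = (Gi * G) *\<^sub>v c"
    unfolding coef_def
    using assoc_mult_mat_vec[OF Gi_carrier G_carrier c] assoc_mult_mat_vec[OF ctrans_BE BE_carrier c]
    by simp
  also have "\<dots> = c" using Gi_props c by simp
  finally show ?thesis unfolding Be using R_apply[of "BE *\<^sub>v c"] BE_carrier c by auto
qed

lemma ctrans_BE_entry_bound:
  assumes a: "a \<in> carrier_vec M" and m: "\<forall>l<Nb. cmod (herm_inner (col B l) a) \<le> m"
  shows "\<forall>k<dim_vec (ctrans BE *\<^sub>v a). cmod ((ctrans BE *\<^sub>v a) $ k) \<le> m"
  using ctrans_BE a m pE_lt ctrans_BE_index by auto

lemma coef_l1_bound: assumes a: "a \<in> carrier_vec M" and m: "\<forall>l<Nb. cmod (herm_inner (col B l) a) \<le> m"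
  shows "l1norm (coef a) \<le> real ne * m / (1 - mub * (real ne - 1))"
proof -
  have "(1 - mub * (real ne - 1)) * l1norm (coef a) \<le> l1norm (ctrans BE *\<^sub>v a)"
    using gram_l1_lower_bound[OF coef_carrier[OF a]] gram_coef[OF a] by simp
  also have "\<dots> \<le> (\<Sum>k<ne. m)"
  proof -
    have d: "dim_vec (ctrans BE *\<^sub>v a) = ne" using ctrans_BE a by simp
    show ?thesis
      unfolding l1norm_def d using ctrans_BE_entry_bound[OF a m] d by (intro sum_mono) auto
  qed
  finally have "(1 - mub * (real ne - 1)) * l1norm (coef a) \<le> real ne * m" by simp
  thus ?thesis using dominant by (simp add: pos_le_divide_eq mult.commute)
qed

lemma herm_R_perturbation:
  assumes a: "a \<in> carrier_vec M" and a': "a' \<in> carrier_vec M"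
    and m: "\<forall>l<Nb. cmod (herm_inner (col B l) a) \<le> m"
    and m': "\<forall>l<Nb. cmod (herm_inner (col B l) a') \<le> m" and m0: "m \<ge> 0"
  shows "cmod (herm_inner a (R *\<^sub>v a') - herm_inner a a') \<le> real ne * m^2 / (1 - mub * (real ne - 1))"
proof -
  have c: "coef a' \<in> carrier_vec ne" using coef_carrier[OF a'] .
  have w: "BE *\<^sub>v coef a' \<in> carrier_vec M" using BE_carrier c by simp
  have "herm_inner a (R *\<^sub>v a') = herm_inner a a' - herm_inner a (BE *\<^sub>v coef a')"
    unfolding R_apply[OF a'] using a a' w BE_carrier by (intro herm_minus2) auto
  hence "cmod (herm_inner a (R *\<^sub>v a') - herm_inner a a') = cmod (herm_inner (BE *\<^sub>v coef a') a)"
    using herm_sym[of a "BE *\<^sub>v coef a'"] a w BE_carrier by (simp add: norm_minus_commute)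
  also have "\<dots> = cmod (herm_inner (coef a') (ctrans BE *\<^sub>v a))"
    using herm_adj[OF BE_carrier c a] by simp
  also have "\<dots> \<le> m * l1norm (coef a')"
    using ctrans_BE_entry_bound[OF a m] c ctrans_BE a by (intro herm_l1_bound) auto
  also have "\<dots> \<le> m * (real ne * m / (1 - mub * (real ne - 1)))"
    using coef_l1_bound[OF a' m'] m0 by (rule mult_left_mono)
  finally show ?thesis by (simp add: power2_eq_square mult_ac)
qed

end

section \<open>The l1 cone argument\<close>

lemma cone_ineq:
  assumes x: "x \<in> carrier_vec N" and xh: "xh \<in> carrier_vec N"
    and l1: "l1norm xh \<le> l1norm x" and S: "S \<subseteq> {..<N}"
  shows "(\<Sum>i\<in>{..<N} - S. cmod ((x - xh) $ i)) \<le> (\<Sum>i\<in>S. cmod ((x - xh) $ i))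
           + 2 * (\<Sum>i\<in>{..<N} - S. cmod (x $ i))"
proof -
  have split: "\<And>f. (\<Sum>i<N. f i) = (\<Sum>i\<in>S. f i) + (\<Sum>i\<in>{..<N} - S. f i)"
    using S by (metis finite_lessThan sum.subset_diff add.commute)
  have on_S: "(\<Sum>i\<in>S. cmod (x $ i) - cmod ((x - xh) $ i)) \<le> (\<Sum>i\<in>S. cmod (xh $ i))"
  proof (rule sum_mono)
    fix i assume "i \<in> S" hence i: "i < N" using S by auto
    have "x $ i = xh $ i + (x - xh) $ i" using i x xh by simp
    thus "cmod (x $ i) - cmod ((x - xh) $ i) \<le> cmod (xh $ i)"
      by (metis diff_le_eq norm_triangle_ineq)
  qed
  have off_S: "(\<Sum>i\<in>{..<N} - S. cmod ((x - xh) $ i) - cmod (x $ i)) \<le> (\<Sum>i\<in>{..<N} - S. cmod (xh $ i))"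
  proof (rule sum_mono)
    fix i assume "i \<in> {..<N} - S" hence i: "i < N" by auto
    have "(x - xh) $ i = x $ i - xh $ i" using i x xh by simp
    thus "cmod ((x - xh) $ i) - cmod (x $ i) \<le> cmod (xh $ i)"
      by (metis diff_le_eq norm_triangle_ineq4 add.commute)
  qed
  have "l1norm xh = (\<Sum>i\<in>S. cmod (xh $ i)) + (\<Sum>i\<in>{..<N} - S. cmod (xh $ i))"
    unfolding l1norm_def using xh split by simp
  moreover have "l1norm x = (\<Sum>i\<in>S. cmod (x $ i)) + (\<Sum>i\<in>{..<N} - S. cmod (x $ i))"
    unfolding l1norm_def using x split by simp
  ultimately show ?thesis using on_S off_S l1 by (simp add: sum_subtractf)
qed

lemma tail_l1: assumes x: "x \<in> carrier_vec N"
  shows "l1norm (x - restrict_vec x X) = (\<Sum>i\<in>{..<N} - X. cmod (x $ i))"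
proof -
  have "l1norm (x - restrict_vec x X) = (\<Sum>i<N. if i \<in> X then 0 else cmod (x $ i))"
    unfolding l1norm_def restrict_vec_def using x by (intro sum.cong) auto
  also have "\<dots> = (\<Sum>i\<in>{..<N} - X. cmod (x $ i))"
    by (simp add: sum.If_cases Diff_eq)
  finally show ?thesis .
qed

text \<open>Solving the row estimates under the cone constraint: summing the row estimates over the
  s indices of S and using that the off-S mass is at most the on-S mass plus 2 sig bounds the
  total mass, provided 1 + mA - 2 s kap > 0.\<close>
lemma cone_row_solve:
  fixes a :: "nat \<Rightarrow> real"
  assumes S: "S \<subseteq> {..<N}" and cs: "card S = s"
    and rows: "\<forall>i<N. (1 + mA) * a i \<le> tau + kap * (\<Sum>j<N. a j)"
    and cone: "(\<Sum>i\<in>{..<N} - S. a i) \<le> (\<Sum>i\<in>S. a i) + 2 * sig"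
    and D: "1 + mA - 2 * real s * kap > 0" and kap: "kap \<ge> 0"
  shows "(\<Sum>j<N. a j) \<le> (2 * real s / (1 + mA - 2 * real s * kap)) * tau
          + (4 * real s * kap / (1 + mA - 2 * real s * kap) + 2) * sig"
proof -
  define hS where "hS = (\<Sum>i\<in>S. a i)"
  define L where "L = (\<Sum>j<N. a j)"
  define Dv where "Dv = 1 + mA - 2 * real s * kap"
  have "L = hS + (\<Sum>i\<in>{..<N} - S. a i)"
    unfolding L_def hS_def using S by (metis finite_lessThan sum.subset_diff add.commute)
  hence L2: "L \<le> 2 * hS + 2 * sig" using cone unfolding hS_def by linarith
  have "(\<Sum>i\<in>S. (1 + mA) * a i) \<le> (\<Sum>i\<in>S. tau + kap * L)"
    using rows S unfolding L_def by (intro sum_mono) auto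
  hence "(1 + mA) * hS \<le> real s * (tau + kap * L)"
    using cs unfolding hS_def by (simp add: sum_distrib_left)
  also have "\<dots> \<le> real s * (tau + kap * (2 * hS + 2 * sig))"
    using L2 kap by (intro mult_left_mono add_left_mono) auto
  finally have "Dv * hS \<le> real s * tau + 2 * real s * kap * sig"
    unfolding Dv_def by (simp add: algebra_simps)
  hence "hS \<le> (real s * tau + 2 * real s * kap * sig) / Dv"
    using D unfolding Dv_def by (simp add: pos_le_divide_eq mult.commute)
  hence "L \<le> 2 * ((real s * tau + 2 * real s * kap * sig) / Dv) + 2 * sig" using L2 by linarith
  also have "\<dots> = (2 * real s / Dv) * tau + (4 * real s * kap / Dv + 2) * sig"
    by (simp add: field_simps add_divide_distrib)
  finally show ?thesis unfolding L_def Dv_def .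
qed

lemma l1_recovery_bound:
  assumes x: "x \<in> carrier_vec N" and xh: "xh \<in> carrier_vec N"
    and l1: "l1norm xh \<le> l1norm x" and S: "S \<subseteq> {..<N}" and cs: "card S = s"
    and rows: "\<forall>i<N. (1 + mA) * cmod ((x - xh) $ i) \<le> tau + kap * l1norm (x - xh)"
    and D: "1 + mA - 2 * real s * kap > 0" and kap: "kap \<ge> 0"
  shows "l2norm (x - xh) \<le> (2 * real s / (1 + mA - 2 * real s * kap)) * tau
          + (4 * real s * kap / (1 + mA - 2 * real s * kap) + 2) * l1norm (x - restrict_vec x S)"
proof -
  have l1h: "l1norm (x - xh) = (\<Sum>j<N. cmod ((x - xh) $ j))" unfolding l1norm_def using xh by simp
  have "l1norm (x - xh) \<le> (2 * real s / (1 + mA - 2 * real s * kap)) * tau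
          + (4 * real s * kap / (1 + mA - 2 * real s * kap) + 2) * (\<Sum>i\<in>{..<N} - S. cmod (x $ i))"
    unfolding l1h using S cs rows[unfolded l1h] cone_ineq[OF x xh l1 S] D kap by (rule cone_row_solve)
  thus ?thesis using l2_le_l1[of "x - xh"] tail_l1[OF x] by simp
qed

text \<open>delta: the largest change of a Gram entry a_i^H a_j caused by projecting out range B_E.\<close>
definition cross_leak :: "real \<Rightarrow> real \<Rightarrow> nat \<Rightarrow> real" where
  "cross_leak mub mum ne = real ne * mum^2 / (1 - mub * (real ne - 1))"

text \<open>kappa: bound on the off-diagonal Gram entries of the projected dictionary R A.\<close>
definition kappa :: "real \<Rightarrow> real \<Rightarrow> real \<Rightarrow> nat \<Rightarrow> real" where
  "kappa mua mub mum ne = mua + cross_leak mub mum ne"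

definition denom :: "real \<Rightarrow> real \<Rightarrow> real \<Rightarrow> nat \<Rightarrow> nat \<Rightarrow> real" where
  "denom mua mub mum nx ne = 1 + mua - 2 * real nx * kappa mua mub mum ne"

text \<open>The constants are set to 0 outside the regime where they are meaningful, so that they are
  nonnegative for all arguments.\<close>
definition C5f :: "real \<Rightarrow> real \<Rightarrow> real \<Rightarrow> nat \<Rightarrow> nat \<Rightarrow> real" where
  "C5f mua mub mum nx ne = (if denom mua mub mum nx ne > 0 \<and> kappa mua mub mum ne \<ge> 0
     then 2 * real nx / denom mua mub mum nx ne else 0)"

definition C6f :: "real \<Rightarrow> real \<Rightarrow> real \<Rightarrow> nat \<Rightarrow> nat \<Rightarrow> real" where
  "C6f mua mub mum nx ne = (if denom mua mub mum nx ne > 0 \<and> kappa mua mub mum ne \<ge> 0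
     then 4 * real nx * kappa mua mub mum ne / denom mua mub mum nx ne + 2 else 0)"

lemma C5f_nonneg: "C5f mua mub mum nx ne \<ge> 0" unfolding C5f_def by auto

lemma C6f_nonneg: "C6f mua mub mum nx ne \<ge> 0" unfolding C6f_def by auto

text \<open>The coherence condition 2 n_x n_e mu_m^2 < f(2 n_x, n_e) says exactly that both factors of f
  are positive and that 2 n_x delta < 1 - mu_a (2 n_x - 1), i.e. that the denominator is
  positive.\<close>
lemma coherence_condition:
  assumes mua: "mua \<ge> 0" and mum: "mum \<ge> 0"
    and cond: "2 * real nx * real ne * mum^2 < fcoh mua mub (2 * nx) ne"
  shows "1 - mub * (real ne - 1) > 0" and "kappa mua mub mum ne \<ge> 0"
    and "denom mua mub mum nx ne > 0"
proof -
  define p1 where "p1 = 1 - mua * (real (2 * nx) - 1)"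
  define p2 where "p2 = 1 - mub * (real ne - 1)"
  have cond': "2 * real nx * real ne * mum^2 < pos_part p1 * pos_part p2"
    using cond unfolding fcoh_def p1_def p2_def .
  hence "pos_part p1 * pos_part p2 > 0" by (smt (verit) zero_le_mult_iff zero_le_power2 of_nat_0_le_iff)
  hence p1: "p1 > 0" and p2: "p2 > 0"
    unfolding pos_part_def by (auto simp: zero_less_mult_iff split: if_splits)
  show "1 - mub * (real ne - 1) > 0" using p2 unfolding p2_def .
  have leak: "cross_leak mub mum ne = real ne * mum^2 / p2" unfolding cross_leak_def p2_def ..
  show "kappa mua mub mum ne \<ge> 0" unfolding kappa_def leak using mua p2 by simp
  have "2 * real nx * cross_leak mub mum ne = (2 * real nx * real ne * mum^2) / p2"
    unfolding leak by simp
  also have "\<dots> < p1" using cond' p1 p2 by (simp add: pos_part_def divide_less_eq)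
  finally show "denom mua mub mum nx ne > 0"
    unfolding denom_def kappa_def p1_def by (simp add: algebra_simps)
qed

section \<open>The projected dictionary R A\<close>

context known_support
begin

lemma projected_gram_entry:
  assumes A: "A \<in> carrier_mat M Na" and i: "i < Na" and j: "j < Na"
  shows "cmod (herm_inner (col A i) (R *\<^sub>v col A j) - herm_inner (col A i) (col A j))
           \<le> cross_leak mub (cross_coh A B) ne"
proof -
  have coh: "\<forall>l<Nb. cmod (herm_inner (col B l) (col A k)) \<le> cross_coh A B" if "k < Na" for k
    using that A B cross_coh_bound_sym by auto
  show ?thesis unfolding cross_leak_def
    using A by (intro herm_R_perturbation coh i j cross_coh_nonneg) auto
qed

lemma projected_row_estimate:
  assumes A: "A \<in> carrier_mat M Na" and uA: "\<forall>k<Na. l2norm (col A k) = 1"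
    and h: "h \<in> carrier_vec Na" and i: "i < Na"
  shows "(1 + mutual_coh A) * cmod (h $ i)
           \<le> l2norm (R *\<^sub>v (A *\<^sub>v h)) + kappa (mutual_coh A) mub (cross_coh A B) ne * l1norm h"
proof -
  let ?ai = "col A i" and ?dlt = "cross_leak mub (cross_coh A B) ne"
  let ?g = "\<lambda>j. herm_inner ?ai (R *\<^sub>v col A j)"
  note RR = R_carrier_mat
  have colA: "\<And>j. col A j \<in> carrier_vec M" using A by auto
  have expand: "herm_inner ?ai (R *\<^sub>v (A *\<^sub>v h)) = (\<Sum>j<Na. ?g j * h $ j)"
  proof -
    have "R *\<^sub>v (A *\<^sub>v h) = (R * A) *\<^sub>v h" using assoc_mult_mat_vec[OF RR A h] by simp
    thus ?thesis using herm_inner_mult[of "R * A" M Na h ?ai] RR A h colA col_mult2[OF RR A]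
      by (simp add: mult.commute)
  qed
  have "(1 - ?dlt + (mutual_coh A + ?dlt)) * cmod (h $ i)
          \<le> l2norm (R *\<^sub>v (A *\<^sub>v h)) + (mutual_coh A + ?dlt) * (\<Sum>j<Na. cmod (h $ j))"
  proof (rule row_bound[where g="?g"])
    have "herm_inner ?ai ?ai = 1" using herm_self[of ?ai] uA i by simp
    thus "1 - ?dlt \<le> cmod (?g i)"
      using projected_gram_entry[OF A i i] norm_triangle_ineq4[of "?g i" "?g i - 1"] by simp
    show "\<forall>j<Na. j \<noteq> i \<longrightarrow> cmod (?g j) \<le> mutual_coh A + ?dlt"
    proof (intro allI impI)
      fix j assume j: "j < Na" "j \<noteq> i"
      have "cmod (herm_inner ?ai (col A j)) \<le> mutual_coh A"
        using mutual_coh_bound[of i A j] i j A by simp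
      thus "cmod (?g j) \<le> mutual_coh A + ?dlt"
        using projected_gram_entry[OF A i j(1)]
          norm_triangle_ineq[of "herm_inner ?ai (col A j)" "?g j - herm_inner ?ai (col A j)"] by simp
    qed
    show "cmod (\<Sum>j<Na. ?g j * h $ j) \<le> l2norm (R *\<^sub>v (A *\<^sub>v h))"
      using herm_R_bound[OF colA[of i], of "A *\<^sub>v h"] A h uA i by (simp add: expand)
  qed (rule i)
  thus ?thesis using h unfolding kappa_def l1norm_def by simp
qed

lemma projected_residual:
  assumes A: "A \<in> carrier_mat M Na" and x: "x \<in> carrier_vec Na" and xt: "xt \<in> carrier_vec Na"
    and e: "e \<in> carrier_vec Nb" and e_supp: "\<forall>j<Nb. j \<notin> E \<longrightarrow> e $ j = 0"
    and n: "n \<in> carrier_vec M" and z: "z = A *\<^sub>v x + B *\<^sub>v e + n"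
  shows "R *\<^sub>v (z - A *\<^sub>v xt) = R *\<^sub>v (A *\<^sub>v (x - xt)) + R *\<^sub>v n"
proof -
  have "z - A *\<^sub>v xt = A *\<^sub>v (x - xt) + B *\<^sub>v e + n"
    unfolding z mult_minus_distrib_mat_vec[OF A x xt] using A B x xt e n by (intro eq_vecI) auto
  thus ?thesis using R_carrier_mat A B x xt e n R_kills_supported[OF e e_supp]
    by (simp add: mult_add_distrib_mat_vec[of R M M])
qed

end

text \<open>The recovery guarantee with explicit constants: x is feasible, so ||xhat||_1 <= ||x||_1;
  the projected residual of h = x - xhat has norm at most eps + eta; the row estimates for R A
  then feed the l1 cone argument.\<close>
lemma robust_recovery:
  assumes A: "A \<in> carrier_mat M Na" and B: "B \<in> carrier_mat M Nb"
    and uA: "\<forall>k<Na. l2norm (col A k) = 1" and uB: "\<forall>k<Nb. l2norm (col B k) = 1"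
    and x: "x \<in> carrier_vec Na" and e: "e \<in> carrier_vec Nb" and n: "n \<in> carrier_vec M"
    and z: "z = A *\<^sub>v x + B *\<^sub>v e + n" and neps: "l2norm n \<le> eps"
    and supp: "is_supp_n nx x X"
    and cond: "2 * real nx * real (card (vsupp e)) * (cross_coh A B)^2
      < fcoh (mutual_coh A) (mutual_coh B) (2 * nx) (card (vsupp e))"
    and eta: "eta \<ge> eps" and xh: "xhat \<in> carrier_vec Na"
    and RE: "RE = 1\<^sub>m M - col_submat B (vsupp e) * pinv (col_submat B (vsupp e))"
    and feas: "l2norm (RE *\<^sub>v (z - A *\<^sub>v xhat)) \<le> eta"
    and minim: "\<forall>xt \<in> carrier_vec Na. l2norm (RE *\<^sub>v (z - A *\<^sub>v xt)) \<le> eta \<longrightarrow> l1norm xhat \<le> l1norm xt"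
  shows "l2norm (x - xhat)
    \<le> C5f (mutual_coh A) (mutual_coh B) (cross_coh A B) nx (card (vsupp e)) * (eps + eta)
     + C6f (mutual_coh A) (mutual_coh B) (cross_coh A B) nx (card (vsupp e)) * l1norm (x - restrict_vec x X)"
proof -
  define E where "E = vsupp e"
  let ?mA = "mutual_coh A" and ?mB = "mutual_coh B" and ?mM = "cross_coh A B" and ?ne = "card E"
  let ?kap = "kappa ?mA ?mB ?mM ?ne" and ?D = "denom ?mA ?mB ?mM nx ?ne"
  note regime = coherence_condition[OF mutual_coh_nonneg cross_coh_nonneg cond[folded E_def]]
  have Esub: "E \<subseteq> {..<Nb}" and e_supp: "\<forall>j<Nb. j \<notin> E \<longrightarrow> e $ j = 0"
    unfolding E_def vsupp_def using e by auto
  interpret known_support M Nb B E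
    using B uB Esub regime(1) by unfold_locales
  have RE_def': "RE = R" unfolding RE E_def ..
  note RR = R_carrier_mat
  note residual = projected_residual[OF A x _ e e_supp n z]
  have Rn: "l2norm (R *\<^sub>v n) \<le> eps" using R_contract[OF n] neps by linarith
  \<comment> \<open>x itself is feasible, so the minimiser has no larger l1 norm.\<close>
  have l1x: "l1norm xhat \<le> l1norm x"
  proof -
    have "x - x = 0\<^sub>v Na" using x by simp
    hence "R *\<^sub>v (z - A *\<^sub>v x) = R *\<^sub>v n"
      using residual[OF x] RR A n by (simp add: mult_mat_vec_zero_right)
    thus ?thesis using minim x Rn eta unfolding RE_def' by force
  qed
  have tau: "l2norm (R *\<^sub>v (A *\<^sub>v (x - xhat))) \<le> eps + eta"
  proof -
    have c: "R *\<^sub>v (A *\<^sub>v (x - xhat)) \<in> carrier_vec M" "R *\<^sub>v n \<in> carrier_vec M"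
      using RR A x xh n by auto
    hence "R *\<^sub>v (A *\<^sub>v (x - xhat)) = R *\<^sub>v (z - A *\<^sub>v xhat) - R *\<^sub>v n"
      unfolding residual[OF xh] by (intro eq_vecI) auto
    thus ?thesis using l2norm_diff[of "R *\<^sub>v (z - A *\<^sub>v xhat)" "R *\<^sub>v n"] c feas Rn
      unfolding RE_def' by simp
  qed
  have Xsub: "X \<subseteq> {..<Na}" and cX: "card X = nx" using supp x unfolding is_supp_n_def by auto
  have rows: "\<forall>i<Na. (1 + ?mA) * cmod ((x - xhat) $ i)
      \<le> l2norm (R *\<^sub>v (A *\<^sub>v (x - xhat))) + ?kap * l1norm (x - xhat)"
    by (intro allI impI projected_row_estimate[OF A uA]) (use x xh in auto)
  have "l2norm (x - xhat) \<le> (2 * real nx / ?D) * l2norm (R *\<^sub>v (A *\<^sub>v (x - xhat)))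
          + (4 * real nx * ?kap / ?D + 2) * l1norm (x - restrict_vec x X)"
    using l1_recovery_bound[OF x xh l1x Xsub cX rows] regime unfolding denom_def by simp
  also have "\<dots> \<le> (2 * real nx / ?D) * (eps + eta) + (4 * real nx * ?kap / ?D + 2) * l1norm (x - restrict_vec x X)"
    using tau regime(3) by (intro add_right_mono mult_left_mono) auto
  finally show ?thesis using regime unfolding C5f_def C6f_def E_def by simp
qed

theorem theorem3:
  "\<exists>C5 C6 :: real \<Rightarrow> real \<Rightarrow> real \<Rightarrow> nat \<Rightarrow> nat \<Rightarrow> real.
     (\<forall>mua mub mum nx ne. C5 mua mub mum nx ne \<ge> 0 \<and> C6 mua mub mum nx ne \<ge> 0) \<and>
     (\<forall>(M::nat) (Na::nat) (Nb::nat) (A::complex mat) (B::complex mat) (x::complex vec)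
        (e::complex vec) (n::complex vec) (z::complex vec) (eps::real) (eta::real)
        (nx::nat) (X::nat set) (xhat::complex vec).
        A \<in> carrier_mat M Na \<longrightarrow> B \<in> carrier_mat M Nb \<longrightarrow>
        (\<forall>k<Na. l2norm (col A k) = 1) \<longrightarrow> (\<forall>k<Nb. l2norm (col B k) = 1) \<longrightarrow>
        x \<in> carrier_vec Na \<longrightarrow> e \<in> carrier_vec Nb \<longrightarrow> n \<in> carrier_vec M \<longrightarrow>
        z = A *\<^sub>v x + B *\<^sub>v e + n \<longrightarrow> l2norm n \<le> eps \<longrightarrow>
        nx \<ge> 1 \<longrightarrow> is_supp_n nx x X \<longrightarrow>
        (let mua = mutual_coh A; mub = mutual_coh B; mum = cross_coh A B;
             E = vsupp e; ne = card E;
             RE = 1\<^sub>m M - col_submat B E * pinv (col_submat B E)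
         in 2 * real nx * real ne * mum^2 < fcoh mua mub (2 * nx) ne \<longrightarrow>
            eta \<ge> eps \<longrightarrow>
            xhat \<in> carrier_vec Na \<longrightarrow>
            l2norm (RE *\<^sub>v (z - A *\<^sub>v xhat)) \<le> eta \<longrightarrow>
            (\<forall>xt \<in> carrier_vec Na. l2norm (RE *\<^sub>v (z - A *\<^sub>v xt)) \<le> eta \<longrightarrow>
                 l1norm xhat \<le> l1norm xt) \<longrightarrow>
            l2norm (x - xhat) \<le> C5 mua mub mum nx ne * (eps + eta)
                                 + C6 mua mub mum nx ne * l1norm (x - restrict_vec x X)))"
  \<comment> \<open>Take the explicit constants C5f, C6f; the bound itself is robust_recovery.\<close>
proof (rule exI[of _ C5f], rule exI[of _ C6f], intro conjI allI impI)
  show "C5f mua mub mum nx ne \<ge> 0" "C6f mua mub mum nx ne \<ge> 0" for mua mub mum nx ne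
    by (rule C5f_nonneg, rule C6f_nonneg)
qed (unfold Let_def, intro impI, rule robust_recovery; (assumption | rule refl))

end
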